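(* Let $S\subseteq 2^E$ be a powerful set with $|E|=n$ and $r_S(E)=n-1$. Then $S$ has a deletable element $e\in E$.
   Context: A set $S\subseteq 2^E$ ($E$ finite) is powerful if for every $X\subseteq E$ the number of members of $S$ contained in $X$ is a power of 2. Its rank function is $r_S(X)=\log_2\big(|S|/|\{Y\in S:Y\subseteq E\setminus X\}|\big)$. Let $f$ be the $\{0,1\}$-valued indicator function of $S$. For $e\in E$ let $g(X)=f(X)+f(X\cup\{e\})$ for $X\subseteq E\setminus\{e\}$; the element $e$ is deletable if $\frac{1}{g(\emptyset)}g$ is $\{0,1\}$-valued, i.e. the deletion of $e$ (the multiset over $E\setminus\{e\}$ with indicator $g$) is, up to scaling, a powerful set, namely $\{X\subseteq E\setminus\{e\}: X\in S\text{ or }X\cup\{e\}\in S\}$. *)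

theory Defs
  imports Main Complex_Main
begin

definition powerful :: "'a set \<Rightarrow> 'a set set \<Rightarrow> bool" where
  "powerful E S \<longleftrightarrow> finite E \<and> S \<subseteq> Pow E \<and>
     (\<forall>X. X \<subseteq> E \<longrightarrow> (\<exists>k::nat. card {Y \<in> S. Y \<subseteq> X} = 2 ^ k))"

definition rankS :: "'a set \<Rightarrow> 'a set set \<Rightarrow> 'a set \<Rightarrow> real" where
  "rankS E S X = log 2 (real (card S) / real (card {Y \<in> S. Y \<subseteq> E - X}))"

definition indS :: "'a set set \<Rightarrow> 'a set \<Rightarrow> real" where
  "indS S X = (if X \<in> S then 1 else 0)"

definition delg :: "'a set set \<Rightarrow> 'a \<Rightarrow> 'a set \<Rightarrow> real" where
  "delg S e X = indS S X + indS S (X \<union> {e})"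

definition deletable :: "'a set \<Rightarrow> 'a set set \<Rightarrow> 'a \<Rightarrow> bool" where
  "deletable E S e \<longleftrightarrow> e \<in> E \<and>
     (\<forall>X. X \<subseteq> E - {e} \<longrightarrow> (1 / delg S e {}) * delg S e X \<in> {0, 1})"

end

theory Submission
  imports Defs
begin

text \<open>
  Since \<open>{} \<in> S\<close>, the rank hypothesis says that \<open>S\<close> has \<open>2^(n-1)\<close> members. Let \<open>g\<^sub>e(X)\<close> be
  the number of members of \<open>S\<close> among \<open>X\<close> and \<open>X \<union> {e}\<close>; the number of members of \<open>S\<close> below
  \<open>X \<union> {e}\<close> is then the sum of \<open>g\<^sub>e\<close> over the subsets of \<open>X\<close>, and it is a power of 2.

  If a singleton \<open>{e}\<close> lies in \<open>S\<close>, these counts are at least 2, hence even, and induction on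
  \<open>X\<close> gives \<open>g\<^sub>e(X) \<in> {0, 2}\<close>. Otherwise every nonempty \<open>W \<subseteq> E\<close> has fewer than \<open>2^|W|\<close>,
  hence at most \<open>2^(|W|-1)\<close>, members of \<open>S\<close> below it, and \<open>E\<close> is extremal, i.e. attains this
  bound. If \<open>e\<close> is a star centre, i.e. \<open>{e, y} \<in> S\<close> for all \<open>y \<noteq> e\<close>, induction on \<open>X\<close> shows
  that the count below \<open>X \<union> {e}\<close> is \<open>g\<^sub>e(X) + 2^|X| - 1\<close>, a power of 2 only for \<open>g\<^sub>e(X) = 1\<close>.
  Every extremal \<open>W\<close> has a star centre, by induction on \<open>W\<close>: a pair \<open>{x, y} \<notin> S\<close> inside \<open>W\<close>
  makes \<open>W - {x}\<close> or \<open>W - {y}\<close> extremal, and a star centre \<open>e\<close> of \<open>W - {z}\<close> either stays one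
  for \<open>W\<close> or passes the role to an \<open>m\<close> with \<open>{z, m}\<close> and \<open>{z, e, m}\<close> in \<open>S\<close>.
\<close>

definition is_pow2 :: "nat \<Rightarrow> bool" where
  "is_pow2 v \<longleftrightarrow> (\<exists>k. v = 2 ^ k)"

lemma is_pow2_ge_1: "is_pow2 v \<Longrightarrow> 1 \<le> v"
  unfolding is_pow2_def by auto

lemma is_pow2_odd_eq_1: "is_pow2 v \<Longrightarrow> odd v \<Longrightarrow> v = 1"
  unfolding is_pow2_def by auto

lemma is_pow2_even: "is_pow2 v \<Longrightarrow> 2 \<le> v \<Longrightarrow> even v"
  using is_pow2_odd_eq_1 by fastforce

lemma is_pow2_less_imp_double_le:
  assumes "is_pow2 v" "v < 2 ^ j"
  shows "2 * v \<le> 2 ^ j"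
proof -
  obtain k where k: "v = 2 ^ k" "k < j"
    using assms unfolding is_pow2_def by auto
  then have "(2::nat) ^ Suc k \<le> 2 ^ j"
    by (intro power_increasing) auto
  then show ?thesis
    using k by simp
qed

lemma is_pow2_less_double: "is_pow2 v \<Longrightarrow> v < 2 * 2 ^ j \<Longrightarrow> v \<le> 2 ^ j"
  using is_pow2_less_imp_double_le[of v "Suc j"] by simp

lemma is_pow2_add_cases: "is_pow2 (2 ^ j + b) \<Longrightarrow> b \<le> 2 ^ j \<Longrightarrow> b = 0 \<or> b = 2 ^ j"
  using is_pow2_less_double[of "2 ^ j + b" j] by linarith

lemma is_pow2_add_pred_imp_eq_1:
  assumes "is_pow2 (b + (2 ^ k - 1))" "2 \<le> k" "b \<le> 2"
  shows "b = 1"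
proof -
  obtain j where k: "k = Suc j" and "1 \<le> j"
    using assms(2) by (cases k) auto
  then have "(2::nat) \<le> 2 ^ j" "(2::nat) ^ k = 2 * 2 ^ j"
    using power_increasing[of 1 j "2::nat"] by simp_all
  then show ?thesis
    using is_pow2_less_double[OF assms(1), of j] is_pow2_less_double[OF assms(1), of k] assms(3)
    by linarith
qed

lemma finite_card_cases [consumes 1, case_names empty singleton two_le]:
  assumes "finite X"
  obtains "X = {}" | y where "X = {y}" | "2 \<le> card X"
proof (cases "card X")
  case (Suc m)
  then show thesis
    using that(2,3) card_1_singleton_iff[of X] by (cases m) auto
qed (use assms that(1) in simp)

lemma sum_Pow_insert:
  assumes "finite X" "a \<notin> X"
  shows "(\<Sum>Y\<in>Pow (insert a X). h Y) = (\<Sum>Y\<in>Pow X. h Y) + (\<Sum>Y\<in>Pow X. h (insert a Y))"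
proof -
  have "inj_on (insert a) (Pow X)"
    using assms(2) by (auto simp: inj_on_def)
  moreover have "Pow X \<inter> insert a ` Pow X = {}"
    using assms(2) by auto
  ultimately show ?thesis
    using assms(1) by (simp add: Pow_insert sum.union_disjoint sum.reindex)
qed

lemma sum_Pow_singleton: "(\<Sum>Y\<in>Pow {a}. h Y) = h {} + h {a}"
  using sum_Pow_insert[of "{}" a h] by simp

lemma sum_Pow_pair: "a \<noteq> b \<Longrightarrow> (\<Sum>Y\<in>Pow {a, b}. h Y) = h {} + h {b} + h {a} + h {a, b}"
  using sum_Pow_insert[of "{b}" a h] by (simp add: sum_Pow_singleton add.assoc)

text \<open>
  If the sums of \<open>p\<close> over the subsets of every \<open>Z \<subseteq> U\<close> are \<open>0\<close> or \<open>2^|Z|\<close>, a smallest \<open>Z\<close>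
  with nonzero sum has sum \<open>p Z \<le> 2\<close>, so it is a singleton.
\<close>
lemma sum_Pow_zero_or_full_imp_singleton:
  fixes p :: "'a set \<Rightarrow> nat"
  assumes "finite U" "p {} = 0" "\<And>Y. p Y \<le> 2"
    and zero_or_full: "\<And>Z. Z \<subseteq> U \<Longrightarrow> (\<Sum>Y\<in>Pow Z. p Y) \<in> {0, 2 ^ card Z}"
    and "(\<Sum>Y\<in>Pow U. p Y) \<noteq> 0"
  shows "\<exists>m\<in>U. p {m} = 2"
proof -
  obtain Z where Z: "Z \<subseteq> U" "(\<Sum>Y\<in>Pow Z. p Y) \<noteq> 0"
    and minimal: "\<And>Z'. Z' \<subseteq> U \<Longrightarrow> (\<Sum>Y\<in>Pow Z'. p Y) \<noteq> 0 \<Longrightarrow> card Z \<le> card Z'"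
    using ex_has_least_nat[of "\<lambda>Z. Z \<subseteq> U \<and> (\<Sum>Y\<in>Pow Z. p Y) \<noteq> 0" U card] assms(5) by blast
  have "finite Z"
    using Z(1) assms(1) finite_subset by blast
  have "p Y = 0" if "Y \<subset> Z" for Y
  proof -
    have "finite Y" "card Y < card Z"
      using that \<open>finite Z\<close> by (auto intro: psubset_card_mono finite_subset)
    then have "(\<Sum>Y'\<in>Pow Y. p Y') = 0"
      using minimal[of Y] that Z(1) by fastforce
    then show ?thesis
      using \<open>finite Y\<close> by simp
  qed
  then have "(\<Sum>Y\<in>Pow Z. p Y) = p Z"
    using \<open>finite Z\<close> by (simp add: sum.remove[of "Pow Z" Z] sum.neutral psubsetI)
  then have "p Z = 2 ^ card Z"
    using zero_or_full[OF Z(1)] Z(2) by simp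
  moreover have "Z \<noteq> {}"
    using Z(2) assms(2) by auto
  moreover have "\<not> 2 \<le> card Z"
  proof
    assume "2 \<le> card Z"
    then have "(4::nat) \<le> 2 ^ card Z"
      using power_increasing[of 2 "card Z" "2::nat"] by simp
    then show False
      using \<open>p Z = 2 ^ card Z\<close> assms(3)[of Z] by simp
  qed
  ultimately obtain m where "Z = {m}"
    using finite_card_cases[OF \<open>finite Z\<close>] by blast
  then show ?thesis
    using Z(1) \<open>p Z = 2 ^ card Z\<close> by auto
qed

definition count_below :: "'a set set \<Rightarrow> 'a set \<Rightarrow> nat" where
  "count_below S X = card {Y \<in> S. Y \<subseteq> X}"

definition del_mult :: "'a set set \<Rightarrow> 'a \<Rightarrow> 'a set \<Rightarrow> nat" where
  "del_mult S e X = of_bool (X \<in> S) + of_bool (insert e X \<in> S)"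

lemma delg_eq_del_mult: "delg S e X = real (del_mult S e X)"
  unfolding delg_def indS_def del_mult_def by simp

lemma del_mult_le_2: "del_mult S e X \<le> 2"
  unfolding del_mult_def by simp

lemma count_below_eq_sum: "finite X \<Longrightarrow> count_below S X = (\<Sum>Y\<in>Pow X. of_bool (Y \<in> S))"
  unfolding count_below_def by (simp add: Int_def conj_commute)

lemma count_below_insert:
  "finite X \<Longrightarrow> a \<notin> X \<Longrightarrow>
    count_below S (insert a X) = count_below S X + (\<Sum>Y\<in>Pow X. of_bool (insert a Y \<in> S))"
  unfolding count_below_eq_sum[OF finite_insert[THEN iffD2]] count_below_eq_sum
  by (rule sum_Pow_insert)

lemma count_below_insert_eq_sum_del_mult:
  "finite X \<Longrightarrow> a \<notin> X \<Longrightarrow> count_below S (insert a X) = (\<Sum>Y\<in>Pow X. del_mult S a Y)"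
  using count_below_insert[of X a S] count_below_eq_sum[of X S]
  by (simp add: del_mult_def sum.distrib del: sum_of_bool_eq)

lemma count_below_insert_insert_if_del_mult_1:
  assumes "finite Z" "x \<notin> insert e Z" "e \<notin> Z" and "\<And>Y. Y \<subseteq> Z \<Longrightarrow> del_mult S e Y = 1"
  shows "count_below S (insert x (insert e Z)) = 2 ^ card Z + (\<Sum>Y\<in>Pow Z. del_mult S e (insert x Y))"
proof -
  have "count_below S (insert e Z) = (\<Sum>Y\<in>Pow Z. 1)"
    unfolding count_below_insert_eq_sum_del_mult[OF assms(1,3)] using assms(4) by (intro sum.cong) auto
  also have "\<dots> = 2 ^ card Z"
    using assms(1) by (simp add: card_Pow)
  moreover have "(\<Sum>Y\<in>Pow (insert e Z). of_bool (insert x Y \<in> S)) = (\<Sum>Y\<in>Pow Z. del_mult S e (insert x Y))"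
    using assms(1,3) by (simp add: sum_Pow_insert sum.distrib del_mult_def insert_commute del: sum_of_bool_eq)
  ultimately show ?thesis
    using assms(1,2) by (simp add: count_below_insert del: sum_of_bool_eq)
qed

text \<open>
  Inclusion-exclusion over \<open>x\<close> and \<open>y\<close>: fewer than \<open>2^(|W|-2)\<close> members below \<open>W\<close> contain both,
  as \<open>{x, y}\<close> itself is missing.
\<close>
lemma count_below_less_add_Diff:
  assumes "finite W" "x \<in> W" "y \<in> W" "x \<noteq> y" "{x, y} \<notin> S"
  shows "count_below S W < count_below S (W - {x}) + count_below S (W - {y}) + 2 ^ (card W - 2)"
proof -
  define W' where "W' = W - {x, y}"
  have "finite W'"
    using assms(1) unfolding W'_def by simp
  have decomp: "W - {x} = insert y W'" "W - {y} = insert x W'" "W = insert x (insert y W')"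
    and "x \<notin> W'" "y \<notin> W'"
    using assms(2-4) unfolding W'_def by auto
  have "card W = card W' + 2"
    unfolding decomp(3) using \<open>finite W'\<close> \<open>x \<notin> W'\<close> \<open>y \<notin> W'\<close> assms(4) by simp
  let ?fx = "\<lambda>Y. of_bool (insert x Y \<in> S) :: nat"
  let ?fxy = "\<lambda>Y. of_bool (insert x (insert y Y) \<in> S) :: nat"
  have "count_below S W = count_below S (W - {x}) + (\<Sum>Y\<in>Pow W'. ?fx Y) + (\<Sum>Y\<in>Pow W'. ?fxy Y)"
    using count_below_insert[of "insert y W'" x S] sum_Pow_insert[of W' y ?fx]
      \<open>finite W'\<close> \<open>x \<notin> W'\<close> \<open>y \<notin> W'\<close> assms(4) unfolding decomp by simp
  moreover have "(\<Sum>Y\<in>Pow W'. ?fx Y) \<le> count_below S (W - {y})"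
    using count_below_insert[of W' x S] \<open>finite W'\<close> \<open>x \<notin> W'\<close> unfolding decomp(2) by simp
  moreover have "(\<Sum>Y\<in>Pow W'. ?fxy Y) < 2 ^ card W'"
  proof -
    have "Pow W' \<inter> {Y. insert x (insert y Y) \<in> S} \<subset> Pow W'"
      using assms(5) by auto
    then have "card (Pow W' \<inter> {Y. insert x (insert y Y) \<in> S}) < card (Pow W')"
      using \<open>finite W'\<close> by (intro psubset_card_mono) auto
    then show ?thesis
      using \<open>finite W'\<close> by (simp add: card_Pow)
  qed
  ultimately show ?thesis
    using \<open>card W = card W' + 2\<close> by simp
qed

locale powerful_family =
  fixes E :: "'a set" and S :: "'a set set"
  assumes powerful: "powerful E S"
begin

lemma finite_ground: "finite E"
  using powerful unfolding powerful_def by blast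

lemma members_subset_Pow: "S \<subseteq> Pow E"
  using powerful unfolding powerful_def by blast

lemma is_pow2_count_below: "X \<subseteq> E \<Longrightarrow> is_pow2 (count_below S X)"
  using powerful unfolding powerful_def is_pow2_def count_below_def by blast

lemma empty_mem: "{} \<in> S"
proof (rule ccontr)
  assume "{} \<notin> S"
  then have "{Y \<in> S. Y \<subseteq> {}} = {}"
    by auto
  then show False
    using is_pow2_ge_1[OF is_pow2_count_below[of "{}"]] unfolding count_below_def
    by (metis card.empty empty_subsetI not_one_le_zero)
qed

lemma rankS_ground: "count_below S E = 2 ^ k \<Longrightarrow> rankS E S E = k"
proof -
  assume k: "count_below S E = 2 ^ k"
  have "{Y \<in> S. Y \<subseteq> E - E} = {{}}" and "{Y \<in> S. Y \<subseteq> E} = S"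
    using empty_mem members_subset_Pow by auto
  then show ?thesis
    using k unfolding rankS_def count_below_def by simp
qed

lemma del_mult_even_if_singleton_mem:
  assumes "{e} \<in> S" and "X \<subseteq> E - {e}"
  shows "even (del_mult S e X)"
proof -
  have "finite X"
    using assms(2) finite_ground by (meson Diff_subset finite_subset)
  then show ?thesis
    using assms(2)
  proof (induction X rule: finite_psubset_induct)
    case (psubset X)
    have "e \<notin> X" "insert e X \<subseteq> E"
      using psubset.prems assms(1) members_subset_Pow by auto
    have "count_below S (insert e X) = (\<Sum>Y\<in>Pow X. del_mult S e Y)"
      by (rule count_below_insert_eq_sum_del_mult[OF psubset.hyps \<open>e \<notin> X\<close>])
    also have "\<dots> = del_mult S e X + (\<Sum>Y\<in>Pow X - {X}. del_mult S e Y)"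
      using psubset.hyps by (intro sum.remove) auto
    finally have "count_below S (insert e X) = del_mult S e X + (\<Sum>Y\<in>Pow X - {X}. del_mult S e Y)" .
    moreover have "even (\<Sum>Y\<in>Pow X - {X}. del_mult S e Y)"
      using psubset.IH psubset.prems by (intro dvd_sum) auto
    moreover have "2 \<le> count_below S (insert e X)"
    proof -
      have "{{}, {e}} \<subseteq> {Y \<in> S. Y \<subseteq> insert e X}"
        using assms(1) empty_mem by auto
      moreover have "finite {Y \<in> S. Y \<subseteq> insert e X}"
        by (rule finite_subset[of _ "Pow (insert e X)"]) (use psubset.hyps in auto)
      ultimately have "card {{}, {e}} \<le> count_below S (insert e X)"
        unfolding count_below_def by (rule card_mono[rotated])
      then show ?thesis
        by simp
    qed
    ultimately show ?case
      using is_pow2_even[OF is_pow2_count_below[OF \<open>insert e X \<subseteq> E\<close>]] by auto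
  qed
qed

lemma deletable_if_singleton_mem:
  assumes "{e} \<in> S"
  shows "deletable E S e"
  unfolding deletable_def
proof (intro conjI allI impI)
  show "e \<in> E"
    using assms members_subset_Pow by auto
  fix X
  assume "X \<subseteq> E - {e}"
  then have "even (del_mult S e X)"
    by (rule del_mult_even_if_singleton_mem[OF assms])
  then have "del_mult S e X \<in> {0, 2}"
    unfolding del_mult_def by (auto split: split_of_bool_asm)
  moreover have "del_mult S e {} = 2"
    using assms empty_mem unfolding del_mult_def by simp
  ultimately show "1 / delg S e {} * delg S e X \<in> {0, 1}"
    unfolding delg_eq_del_mult by auto
qed

end

locale powerful_family_no_singletons = powerful_family +
  assumes singleton_not_mem: "{x} \<notin> S"
begin

lemma count_below_le:
  assumes "W \<subseteq> E" "W \<noteq> {}"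
  shows "count_below S W \<le> 2 ^ (card W - 1)"
proof -
  obtain w where "w \<in> W"
    using assms(2) by blast
  have "finite W"
    using assms(1) finite_ground finite_subset by blast
  have "{Y \<in> S. Y \<subseteq> W} \<subseteq> Pow W - {{w}}"
    using singleton_not_mem by auto
  then have "count_below S W \<le> card (Pow W - {{w}})"
    unfolding count_below_def using \<open>finite W\<close> by (intro card_mono) auto
  also have "\<dots> < 2 ^ card W"
    using \<open>finite W\<close> \<open>w \<in> W\<close> by (simp add: card_Pow)
  also have "\<dots> = 2 * 2 ^ (card W - 1)"
    using \<open>finite W\<close> assms(2) by (cases "card W") auto
  finally show ?thesis
    using is_pow2_less_double is_pow2_count_below[OF assms(1)] by blast
qed

lemma del_mult_eq_1_if_star:
  assumes "V \<subseteq> E" "e \<in> V" and star: "\<And>y. y \<in> V - {e} \<Longrightarrow> {e, y} \<in> S"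
    and "X \<subseteq> V - {e}"
  shows "del_mult S e X = 1"
proof -
  have "finite X"
    using assms(1,4) finite_ground by (meson Diff_subset finite_subset)
  then show ?thesis
    using assms(4)
  proof (induction X rule: finite_psubset_induct)
    case (psubset X)
    have "e \<notin> X" "insert e X \<subseteq> E"
      using psubset.prems assms(1,2) by auto
    show ?case
      using psubset.hyps
    proof (cases rule: finite_card_cases)
      case empty
      then show ?thesis
        using empty_mem singleton_not_mem by (simp add: del_mult_def)
    next
      case (singleton y)
      then have "{e, y} \<in> S"
        using star psubset.prems by simp
      then show ?thesis
        using singleton singleton_not_mem by (simp add: del_mult_def)
    next
      case two_le
      have "count_below S (insert e X) = (\<Sum>Y\<in>Pow X. del_mult S e Y)"
        by (rule count_below_insert_eq_sum_del_mult[OF psubset.hyps \<open>e \<notin> X\<close>])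
      also have "\<dots> = del_mult S e X + (\<Sum>Y\<in>Pow X - {X}. del_mult S e Y)"
        using psubset.hyps by (intro sum.remove) auto
      also have "(\<Sum>Y\<in>Pow X - {X}. del_mult S e Y) = (\<Sum>Y\<in>Pow X - {X}. 1)"
        using psubset.IH psubset.prems by (intro sum.cong) auto
      also have "\<dots> = 2 ^ card X - 1"
        using psubset.hyps by (simp add: card_Pow)
      finally show ?thesis
        using is_pow2_count_below[OF \<open>insert e X \<subseteq> E\<close>] two_le del_mult_le_2
        by (intro is_pow2_add_pred_imp_eq_1) auto
    qed
  qed
qed

lemma deletable_if_star_centre:
  assumes "e \<in> E" and "\<forall>y\<in>E - {e}. {e, y} \<in> S"
  shows "deletable E S e"
proof -
  have "del_mult S e X = 1" if "X \<subseteq> E - {e}" for X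
    by (rule del_mult_eq_1_if_star[OF subset_refl assms(1)]) (use assms(2) that in auto)
  then show ?thesis
    unfolding deletable_def delg_eq_del_mult using assms(1) by simp
qed

lemma count_below_triple:
  assumes "x \<noteq> m" "x \<noteq> y" "m \<noteq> y"
  shows "count_below S {x, m, y} = 1 + of_bool ({x, m} \<in> S) + of_bool ({x, y} \<in> S)
    + of_bool ({m, y} \<in> S) + of_bool ({x, m, y} \<in> S)"
proof -
  have "count_below S {x, m, y} = (\<Sum>Y\<in>Pow {m, y}. del_mult S x Y)"
    using assms by (intro count_below_insert_eq_sum_del_mult) auto
  then show ?thesis
    using assms empty_mem singleton_not_mem by (simp add: sum_Pow_pair del_mult_def)
qed

lemma pair_mem_if_exactly_one:
  assumes "{x, m, y} \<subseteq> E" "x \<noteq> m" "x \<noteq> y" "m \<noteq> y" "{x, m} \<in> S"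
    and "{x, y} \<in> S \<longleftrightarrow> {x, m, y} \<notin> S"
  shows "{m, y} \<in> S"
proof (rule ccontr)
  assume "{m, y} \<notin> S"
  then have "count_below S {x, m, y} = 3"
    using assms(2-6) by (cases "{x, y} \<in> S") (simp_all add: count_below_triple)
  then show False
    using is_pow2_odd_eq_1[OF is_pow2_count_below[OF assms(1)]] by simp
qed

lemma extremal_Diff_singleton_of_non_member_pair:
  assumes "W \<subseteq> E" "x \<in> W" "y \<in> W" "x \<noteq> y" "{x, y} \<notin> S"
    and extremal: "count_below S W = 2 ^ (card W - 1)"
  shows "\<exists>z\<in>{x, y}. count_below S (W - {z}) = 2 ^ (card (W - {z}) - 1)"
proof (rule ccontr)
  assume not_extremal: "\<not> ?thesis"
  have "finite W"
    using assms(1) finite_ground finite_subset by blast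
  have "card {x, y} \<le> card W"
    using \<open>finite W\<close> assms(2,3) by (intro card_mono) auto
  define k where "k = card W - 2"
  have k: "card W = k + 2"
    using \<open>card {x, y} \<le> card W\<close> assms(4) unfolding k_def by simp
  have half: "2 * count_below S (W - {z}) \<le> 2 ^ k" if "z \<in> {x, y}" for z
  proof -
    have "W - {z} \<subseteq> E" "W - {z} \<noteq> {}" "card (W - {z}) = k + 1"
      using that assms(1-4) \<open>finite W\<close> k by auto
    then have "count_below S (W - {z}) \<le> 2 ^ k"
      using count_below_le[of "W - {z}"] by simp
    moreover have "count_below S (W - {z}) \<noteq> 2 ^ k"
      using not_extremal that \<open>card (W - {z}) = k + 1\<close> by auto
    ultimately show ?thesis
      using is_pow2_less_imp_double_le[OF is_pow2_count_below[OF \<open>W - {z} \<subseteq> E\<close>]] by simp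
  qed
  have "2 * count_below S (W - {x}) \<le> 2 ^ k" "2 * count_below S (W - {y}) \<le> 2 ^ k"
    using half by simp_all
  moreover have "count_below S W = 2 * 2 ^ k"
    using extremal k by simp
  ultimately show False
    using count_below_less_add_Diff[OF \<open>finite W\<close> assms(2-5)] k by simp
qed

lemma sum_del_mult_insert_zero_or_full:
  assumes "insert x (insert e U) \<subseteq> E" "x \<notin> insert e U" "e \<notin> U"
    and "\<And>Y. Y \<subseteq> U \<Longrightarrow> del_mult S e Y = 1" and "Z \<subseteq> U"
  shows "(\<Sum>Y\<in>Pow Z. del_mult S e (insert x Y)) \<in> {0, 2 ^ card Z}"
proof -
  have "finite Z"
    by (rule finite_subset[of _ E]) (use assms(1,5) finite_ground in auto)
  have sub: "insert x (insert e Z) \<subseteq> E" and "x \<notin> insert e Z" "e \<notin> Z"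
    using assms(1,2,3,5) by auto
  then have count: "count_below S (insert x (insert e Z)) =
      2 ^ card Z + (\<Sum>Y\<in>Pow Z. del_mult S e (insert x Y))"
    using \<open>finite Z\<close> assms(4,5) by (intro count_below_insert_insert_if_del_mult_1) auto
  have "card (insert x (insert e Z)) = card Z + 2"
    using \<open>finite Z\<close> \<open>x \<notin> insert e Z\<close> \<open>e \<notin> Z\<close> by simp
  then have "count_below S (insert x (insert e Z)) \<le> 2 * 2 ^ card Z"
    using count_below_le[OF sub] by simp
  then show ?thesis
    using is_pow2_add_cases[of "card Z"] is_pow2_count_below[OF sub] unfolding count by simp
qed

lemma star_centre_if_exactly_one:
  assumes "W \<subseteq> E" "x \<in> W" "m \<in> W - {x, e}" "{x, m} \<in> S" "{e, m} \<in> S"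
    and exactly_one: "\<And>y. y \<in> W - {x, e, m} \<Longrightarrow> {x, y} \<in> S \<longleftrightarrow> {x, m, y} \<notin> S"
  shows "\<forall>y\<in>W - {m}. {m, y} \<in> S"
proof
  fix y
  assume "y \<in> W - {m}"
  then consider "y = x" | "y = e" | "y \<in> W - {x, e, m}"
    by blast
  then show "{m, y} \<in> S"
  proof cases
    case 1
    then show ?thesis
      using assms(4) by (simp add: insert_commute)
  next
    case 2
    then show ?thesis
      using assms(5) by (simp add: insert_commute)
  next
    case 3
    then have "{x, m, y} \<subseteq> E" "x \<noteq> m" "x \<noteq> y" "m \<noteq> y"
      using assms(1-3) by auto
    then show ?thesis
      using pair_mem_if_exactly_one assms(4) exactly_one[OF 3] by blast
  qed
qed

lemma star_centre_extends:
  assumes "W \<subseteq> E" and extremal: "count_below S W = 2 ^ (card W - 1)"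
    and "x \<in> W" "e \<in> W" "x \<noteq> e" "{x, e} \<notin> S"
    and star: "\<And>y. y \<in> W - {x, e} \<Longrightarrow> {e, y} \<in> S"
  shows "\<exists>m\<in>W. \<forall>y\<in>W - {m}. {m, y} \<in> S"
proof -
  define U where "U = W - {x, e}"
  define p where "p Y = del_mult S e (insert x Y)" for Y
  have "finite U"
    using assms(1) finite_ground finite_subset unfolding U_def by blast
  have W: "W = insert x (insert e U)" "x \<notin> insert e U" "e \<notin> U"
    using assms(3-5) unfolding U_def by auto
  have del_mult_1: "del_mult S e Y = 1" if "Y \<subseteq> U" for Y
    using del_mult_eq_1_if_star[of "W - {x}" e Y] assms(1,4,5) star that unfolding U_def by auto
  have zero_or_full: "(\<Sum>Y\<in>Pow Z. p Y) \<in> {0, 2 ^ card Z}" if "Z \<subseteq> U" for Z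
    unfolding p_def using sum_del_mult_insert_zero_or_full[of x e U Z] assms(1) W del_mult_1 that by auto
  have "p {} = 0"
    using assms(6) singleton_not_mem by (simp add: p_def del_mult_def insert_commute)
  have "count_below S W = 2 ^ card U + (\<Sum>Y\<in>Pow U. p Y)"
    unfolding p_def W(1) by (rule count_below_insert_insert_if_del_mult_1[OF \<open>finite U\<close> W(2,3) del_mult_1])
  moreover have "card W = card U + 2"
    using \<open>finite U\<close> W by simp
  ultimately have "(\<Sum>Y\<in>Pow U. p Y) = 2 ^ card U"
    using extremal by simp
  moreover have "p Y \<le> 2" for Y
    unfolding p_def by (rule del_mult_le_2)
  ultimately obtain m where m: "m \<in> U" "p {m} = 2"
    using sum_Pow_zero_or_full_imp_singleton[of U p, OF \<open>finite U\<close> \<open>p {} = 0\<close> _ zero_or_full]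
    by auto
  have "{x, y} \<in> S \<longleftrightarrow> {x, m, y} \<notin> S" if "y \<in> W - {x, e, m}" for y
  proof -
    have "y \<in> U" "m \<noteq> y"
      using that unfolding U_def by auto
    have "p {y} \<in> {0, 2}"
      using zero_or_full[of "{y}"] \<open>y \<in> U\<close> \<open>p {} = 0\<close> by (simp add: sum_Pow_singleton)
    moreover have "p {y} + p {m, y} = 2"
      using zero_or_full[of "{m, y}"] \<open>y \<in> U\<close> \<open>m \<noteq> y\<close> m \<open>p {} = 0\<close> by (auto simp: sum_Pow_pair)
    ultimately show ?thesis
      unfolding p_def del_mult_def by (auto split: split_of_bool_asm)
  qed
  moreover have "{x, m} \<in> S"
    using m(2) unfolding p_def del_mult_def by (auto split: split_of_bool_asm)
  moreover have "m \<in> W - {x, e}" "{e, m} \<in> S"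
    using star m(1) unfolding U_def by auto
  ultimately show ?thesis
    using star_centre_if_exactly_one[OF assms(1,3)] by blast
qed

lemma star_centre_of_Diff_singleton:
  assumes "W \<subseteq> E" "count_below S W = 2 ^ (card W - 1)" "z \<in> W" "e \<in> W - {z}"
    and star: "\<forall>y\<in>W - {z} - {e}. {e, y} \<in> S"
  shows "\<exists>m\<in>W. \<forall>y\<in>W - {m}. {m, y} \<in> S"
proof (cases "{z, e} \<in> S")
  case True
  then have "{e, z} \<in> S"
    by (metis insert_commute)
  then have "{e, y} \<in> S" if "y \<in> W - {e}" for y
    using star that by (cases "y = z") simp_all
  then show ?thesis
    using assms(4) by blast
next
  case False
  moreover have "{e, y} \<in> S" if "y \<in> W - {z, e}" for y
    using star that by blast
  moreover have "e \<in> W" "z \<noteq> e"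
    using assms(4) by auto
  ultimately show ?thesis
    using star_centre_extends[OF assms(1-3)] by blast
qed

lemma star_centre_exists:
  assumes "W \<subseteq> E" "W \<noteq> {}" "count_below S W = 2 ^ (card W - 1)"
  shows "\<exists>e\<in>W. \<forall>y\<in>W - {e}. {e, y} \<in> S"
proof -
  have "finite W"
    using assms(1) finite_ground finite_subset by blast
  then show ?thesis
    using assms
  proof (induction W rule: finite_psubset_induct)
    case (psubset W)
    show ?case
    proof (cases "\<forall>x\<in>W. \<forall>y\<in>W - {x}. {x, y} \<in> S")
      case True
      then show ?thesis
        using psubset.prems(2) by blast
    next
      case False
      then obtain x y where xy: "x \<in> W" "y \<in> W" "x \<noteq> y" "{x, y} \<notin> S"
        by blast
      have "\<exists>z\<in>{x, y}. count_below S (W - {z}) = 2 ^ (card (W - {z}) - 1)"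
        by (rule extremal_Diff_singleton_of_non_member_pair[OF psubset.prems(1) xy psubset.prems(3)])
      then obtain z where z: "z \<in> {x, y}" "count_below S (W - {z}) = 2 ^ (card (W - {z}) - 1)"
        by blast
      have smaller: "W - {z} \<subset> W" "W - {z} \<subseteq> E" "W - {z} \<noteq> {}"
        using z(1) xy psubset.prems(1) by auto
      obtain e where "e \<in> W - {z}" "\<forall>y\<in>W - {z} - {e}. {e, y} \<in> S"
        using psubset.IH[OF smaller z(2)] by blast
      moreover have "z \<in> W"
        using z(1) xy(1,2) by blast
      ultimately show ?thesis
        using star_centre_of_Diff_singleton[OF psubset.prems(1,3)] by blast
    qed
  qed
qed

end

theorem theorem6:
  fixes E :: "'a set" and S :: "'a set set" and n :: nat
  assumes "powerful E S"
    and "card E = n"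
    and "rankS E S E = real n - 1"
  shows "\<exists>e\<in>E. deletable E S e"
proof -
  interpret powerful_family E S
    by unfold_locales (rule assms(1))
  obtain k where k: "count_below S E = 2 ^ k"
    using is_pow2_count_below[of E] unfolding is_pow2_def by auto
  then have "n = k + 1"
    using rankS_ground assms(3) by simp
  then have extremal: "count_below S E = 2 ^ (card E - 1)" and "E \<noteq> {}"
    using k assms(2) by auto
  show ?thesis
  proof (cases "\<exists>e. {e} \<in> S")
    case True
    then obtain e where "deletable E S e"
      using deletable_if_singleton_mem by blast
    then show ?thesis
      unfolding deletable_def by blast
  next
    case False
    then interpret powerful_family_no_singletons E S
      by unfold_locales auto
    show ?thesis
      using star_centre_exists[OF subset_refl \<open>E \<noteq> {}\<close> extremal] deletable_if_star_centre by blast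
  qed
qed

end
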